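(* Let $\mathcal X$ be a real normed space and $\mathcal Y$ a normed space. Suppose that $c:\mathcal X\to\mathcal Y$ is an orthogonally constant mapping. Then there is a mapping $g:\mathbb R\to\mathcal Y$ such that $c(x)=g(\|x\|)$ for each $x\in\mathcal X$.
   Context: For $x,y$ in a real normed space $\mathcal X$, isosceles orthogonality is defined by $x\perp y$ if and only if $\|x+y\|=\|x-y\|$. A mapping $c:\mathcal X\to\mathcal Y$ is called orthogonally constant if $c(x+y)=c(x-y)$ for all $x,y\in\mathcal X$ with $x\perp y$. *)

theory Defs
  imports "HOL-Analysis.Analysis"
begin

definition iso_orth :: "'a::real_normed_vector \<Rightarrow> 'a \<Rightarrow> bool" where
  "iso_orth x y \<longleftrightarrow> norm (x + y) = norm (x - y)"

definition orthogonally_constant :: "('a::real_normed_vector \<Rightarrow> 'b) \<Rightarrow> bool" where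
  "orthogonally_constant c \<longleftrightarrow> (\<forall>x y. iso_orth x y \<longrightarrow> c (x + y) = c (x - y))"

end

theory Submission
  imports Defs
begin

lemma orthogonally_constant_eq_if_norm_eq:
  fixes c :: "'a::real_normed_vector \<Rightarrow> 'b"
  assumes "orthogonally_constant c" and "norm x = norm y"
  shows "c x = c y"
proof -
  define u where "u = (1/2) *\<^sub>R (x + y)"
  define v where "v = (1/2) *\<^sub>R (x - y)"
  have sum: "u + v = x" and diff: "u - v = y"
    unfolding u_def v_def by (simp_all add: algebra_simps flip: scaleR_2)
  have "iso_orth u v"
    unfolding iso_orth_def sum diff by (fact assms(2))
  with assms(1) have "c (u + v) = c (u - v)"
    unfolding orthogonally_constant_def by blast
  then show ?thesis
    unfolding sum diff .
qed

theorem proposition2p3: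
  fixes c :: "'a::real_normed_vector \<Rightarrow> 'b::real_normed_vector"
  assumes "orthogonally_constant c"
  shows "\<exists>g :: real \<Rightarrow> 'b. \<forall>x. c x = g (norm x)"
proof (intro exI allI)
  fix x :: 'a
  have "norm x = norm (SOME y::'a. norm y = norm x)"
    by (rule sym, rule someI) (rule refl)
  then show "c x = (\<lambda>r. c (SOME y::'a. norm y = r)) (norm x)"
    by (rule orthogonally_constant_eq_if_norm_eq [OF assms])
qed

end
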